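(* Let $X$ be a finite set with $|X|\ge 3$, let $\mathcal T$ be a triplet cover for a tree $T\in B(X)$, and let $x\in X$. If $\mu(x)=2$, then $\deg_{\mathcal T}(x)=1$.
   Context: A binary phylogenetic $X$-tree is an unrooted tree whose leaf set is $X$ and all of whose non-leaf vertices are unlabelled of degree three; $B(X)$ is the set of such trees; $\mathring V$ is the set of interior vertices. Pairs in $\binom{X}{2}$ are written $ab$, triples $abc$. Given $\mathcal T\subseteq\binom{X}{2}$, a triple $abc$ supports $v\in\mathring V$ if $a,b,c$ lie one in each of the three components of $T$ minus $v$ and $ab,ac,bc\in\mathcal T$; $S_v(\mathcal T)$ is the set of such triples; $\mathcal T$ is a triplet cover for $T$ if $S_v(\mathcal T)\neq\emptyset$ for all $v\in\mathring V$. The support graph $G(\mathcal T)$ is the bipartite graph on $X\amalg\mathring V$ with $\{x,v\}$ an edge iff $x\in A$ for all $A\in S_v(\mathcal T)$; $\deg_{\mathcal T}(x)$ is the degree of $x$ in $G(\mathcal T)$. The multiplicity $\mu(x)=\mu_{\mathcal T}(x)$ is the number of elements of $\mathcal T$ containing $x$. *)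

theory Defs
  imports Main
begin

text \<open>An unrooted tree is given by a finite vertex set V and a set E of edges,
each edge being a two-element subset of V. The leaf set is X (leaves are
labelled by themselves).\<close>

definition vdegree :: "'a set set \<Rightarrow> 'a \<Rightarrow> nat" where
  "vdegree E v = card {e \<in> E. v \<in> e}"

definition reach_in :: "'a set \<Rightarrow> 'a set set \<Rightarrow> 'a \<Rightarrow> 'a \<Rightarrow> bool" where
  "reach_in W E = (\<lambda>u w. u \<in> W \<and> w \<in> W \<and> {u, w} \<in> E)\<^sup>*\<^sup>*"

definition is_tree :: "'a set \<Rightarrow> 'a set set \<Rightarrow> bool" where
  "is_tree V E \<longleftrightarrow> finite V \<and> V \<noteq> {} \<and>
     (\<forall>e\<in>E. \<exists>u w. e = {u, w} \<and> u \<noteq> w \<and> u \<in> V \<and> w \<in> V) \<and>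
     (\<forall>a\<in>V. \<forall>b\<in>V. reach_in V E a b) \<and>
     card E = card V - 1"

definition binary_phylo_tree :: "'a set \<Rightarrow> 'a set \<Rightarrow> 'a set set \<Rightarrow> bool" where
  "binary_phylo_tree X V E \<longleftrightarrow> is_tree V E \<and> X \<subseteq> V \<and>
     (\<forall>x\<in>X. vdegree E x = 1) \<and> (\<forall>v\<in>V - X. vdegree E v = 3)"

definition interior :: "'a set \<Rightarrow> 'a set \<Rightarrow> 'a set" where
  "interior X V = V - X"

definition separated :: "'a set \<Rightarrow> 'a set set \<Rightarrow> 'a \<Rightarrow> 'a \<Rightarrow> 'a \<Rightarrow> bool" where
  "separated V E v a b \<longleftrightarrow> a \<in> V - {v} \<and> b \<in> V - {v} \<and> \<not> reach_in (V - {v}) E a b"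

definition supp_triples :: "'a set \<Rightarrow> 'a set \<Rightarrow> 'a set set \<Rightarrow> 'a set set \<Rightarrow> 'a \<Rightarrow> 'a set set" where
  "supp_triples X V E Tr v = {A. \<exists>a b c. A = {a, b, c} \<and> a \<in> X \<and> b \<in> X \<and> c \<in> X \<and>
      separated V E v a b \<and> separated V E v a c \<and> separated V E v b c \<and>
      {a, b} \<in> Tr \<and> {a, c} \<in> Tr \<and> {b, c} \<in> Tr}"

definition triplet_cover :: "'a set \<Rightarrow> 'a set \<Rightarrow> 'a set set \<Rightarrow> 'a set set \<Rightarrow> bool" where
  "triplet_cover X V E Tr \<longleftrightarrow> Tr \<subseteq> {p. p \<subseteq> X \<and> card p = 2} \<and>
     (\<forall>v\<in>interior X V. supp_triples X V E Tr v \<noteq> {})"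

text \<open>Degree of x in the support graph G(T).\<close>
definition support_deg :: "'a set \<Rightarrow> 'a set \<Rightarrow> 'a set set \<Rightarrow> 'a set set \<Rightarrow> 'a \<Rightarrow> nat" where
  "support_deg X V E Tr x = card {v \<in> interior X V. \<forall>A\<in>supp_triples X V E Tr v. x \<in> A}"

definition multiplicity_in :: "'a set set \<Rightarrow> 'a \<Rightarrow> nat" where
  "multiplicity_in Tr x = card {p \<in> Tr. x \<in> p}"

end

theory Submission
  imports Defs
begin

text \<open>Let \<open>w\<close> be the unique neighbour of the leaf \<open>x\<close>; as \<open>|X| \<ge> 3\<close>, \<open>w\<close> is interior.
The three elements of a triple supporting \<open>w\<close> lie in the three components of \<open>T - w\<close>,
one of which is \<open>{x}\<close>, so \<open>x\<close> lies in every such triple and \<open>w\<close> is adjacent to \<open>x\<close> in the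
support graph. Conversely, since \<open>\<mu>(x) = 2\<close>, the only triple containing \<open>x\<close> that can
support any vertex is the union of the two pairs of \<open>\<T>\<close> through \<open>x\<close>, and a triple of
leaves pairwise separated by a vertex determines that vertex (it is their median).\<close>

lemma reach_in_refl: "reach_in W E a a"
  by (simp add: reach_in_def)

lemma reach_in_step:
  "u \<in> W \<Longrightarrow> w \<in> W \<Longrightarrow> {u, w} \<in> E \<Longrightarrow> reach_in W E w z \<Longrightarrow> reach_in W E u z"
  unfolding reach_in_def by (rule converse_rtranclp_into_rtranclp) auto

lemma reach_in_trans: "reach_in W E a b \<Longrightarrow> reach_in W E b c \<Longrightarrow> reach_in W E a c"
  unfolding reach_in_def by (rule rtranclp_trans)

lemma reach_in_sym:
  assumes "reach_in W E a b"
  shows "reach_in W E b a"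
  using assms unfolding reach_in_def
proof (induction rule: rtranclp_induct)
  case base
  show ?case by simp
next
  case (step y z)
  then show ?case by (auto simp: insert_commute intro: converse_rtranclp_into_rtranclp)
qed

lemma reach_in_outside: "reach_in W E u w \<Longrightarrow> u \<notin> W \<Longrightarrow> u = w"
  unfolding reach_in_def by (erule converse_rtranclpE) auto

lemma reach_in_closed:
  assumes "reach_in W E a b" "a \<in> C" "\<And>u w. {u, w} \<in> E \<Longrightarrow> u \<in> C \<Longrightarrow> w \<in> C"
  shows "b \<in> C"
  using assms(1,2) unfolding reach_in_def
  by (induction rule: rtranclp_induct) (auto intro: assms(3))

text \<open>Stop a path from \<open>a\<close> to \<open>t\<close> at whichever of \<open>v\<close>, \<open>t\<close> it reaches first.\<close>

lemma reach_in_avoid_either: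
  assumes "reach_in V E a t" "t \<noteq> v"
  shows "reach_in (V - {v}) E a t \<or> reach_in (V - {t}) E a v"
  using assms(1) unfolding reach_in_def[of V]
proof (induction rule: converse_rtranclp_induct)
  case base
  show ?case by (simp add: reach_in_refl)
next
  case (step a a')
  from step.IH show ?case
  proof
    assume path: "reach_in (V - {v}) E a' t"
    have "a' \<noteq> v" using reach_in_outside[OF path] assms(2) by auto
    then show ?thesis
      using step.hyps(1) path reach_in_step[of a "V - {v}" a' E t]
      by (cases "a = v") (auto simp: reach_in_refl)
  next
    assume path: "reach_in (V - {t}) E a' v"
    have "a' \<noteq> t" using reach_in_outside[OF path] assms(2) by auto
    then show ?thesis
      using step.hyps(1) path reach_in_step[of a "V - {t}" a' E v]
      by (cases "a = t") (auto simp: reach_in_refl)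
  qed
qed

lemma reach_in_last_edge:
  assumes "reach_in V E a w" "a \<noteq> w"
  shows "\<exists>n. {n, w} \<in> E \<and> reach_in (V - {w}) E a n"
  using assms unfolding reach_in_def[of V]
proof (induction rule: converse_rtranclp_induct)
  case base
  then show ?case by simp
next
  case (step a a')
  show ?case
  proof (cases "a' = w")
    case True
    then show ?thesis using step.hyps(1) by (auto simp: reach_in_refl)
  next
    case False
    then obtain n where "{n, w} \<in> E" "reach_in (V - {w}) E a' n" using step.IH by blast
    then show ?thesis
      using False step.hyps(1) step.prems reach_in_step[of a "V - {w}" a' E n] by auto
  qed
qed

lemma reach_in_pendant:
  assumes "reach_in W E a x" "{e \<in> E. x \<in> e} = {{x, w}}" "w \<notin> W"
  shows "a = x"
  using assms(1) unfolding reach_in_def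
proof (cases rule: rtranclp.cases)
  case (rtrancl_into_rtrancl y)
  then have "{y, x} \<in> {e \<in> E. x \<in> e}" by simp
  then have "{y, x} = {x, w}" using assms(2) by simp
  then have "y = w" by (auto simp: doubleton_eq_iff)
  then show ?thesis using rtrancl_into_rtrancl assms(3) by auto
qed simp

lemma separated_sym: "separated V E v a b \<Longrightarrow> separated V E v b a"
  unfolding separated_def using reach_in_sym[of "V - {v}" E b a] by blast

lemma separated_neq: "separated V E v a b \<Longrightarrow> a \<noteq> b"
  unfolding separated_def using reach_in_refl[of "V - {v}" E a] by blast

text \<open>The median of three vertices is unique: for each of \<open>p, q, r\<close>, a path to \<open>v\<^sub>1\<close>
avoids \<open>v\<^sub>2\<close> or a path to \<open>v\<^sub>2\<close> avoids \<open>v\<^sub>1\<close>; two of them make the same choice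
and are then joined by a path avoiding a vertex that separates them.\<close>

lemma separating_vertex_unique:
  assumes conn: "\<forall>a\<in>V. \<forall>b\<in>V. reach_in V E a b" and "v\<^sub>1 \<in> V" "v\<^sub>1 \<noteq> v\<^sub>2"
    and "separated V E v\<^sub>1 p q" "separated V E v\<^sub>1 p r" "separated V E v\<^sub>1 q r"
    and "separated V E v\<^sub>2 p q" "separated V E v\<^sub>2 p r" "separated V E v\<^sub>2 q r"
  shows False
proof -
  have choice: "reach_in (V - {v\<^sub>2}) E y v\<^sub>1 \<or> reach_in (V - {v\<^sub>1}) E y v\<^sub>2" if "y \<in> V" for y
    using reach_in_avoid_either[of V E y v\<^sub>1 v\<^sub>2] conn that assms(2,3) by auto
  have V: "p \<in> V" "q \<in> V" "r \<in> V" using assms(4,5) unfolding separated_def by auto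
  have join: "reach_in W E a b" if "reach_in W E a c" "reach_in W E b c" for W a b c
    using that reach_in_sym reach_in_trans by metis
  show False
    using choice[OF V(1)] choice[OF V(2)] choice[OF V(3)] assms(4-9) join
    unfolding separated_def by blast
qed

lemma supp_triples_pairwise:
  assumes "A \<in> supp_triples X V E Tr v" "p \<in> A" "q \<in> A" "p \<noteq> q"
  shows "separated V E v p q \<and> {p, q} \<in> Tr"
proof -
  obtain a b c where A: "A = {a, b, c}"
    and sep: "separated V E v a b" "separated V E v a c" "separated V E v b c"
    and pairs: "{a, b} \<in> Tr" "{a, c} \<in> Tr" "{b, c} \<in> Tr"
    using assms(1) unfolding supp_triples_def by blast
  have "{b, a} \<in> Tr" "{c, a} \<in> Tr" "{c, b} \<in> Tr" using pairs by (simp_all add: insert_commute)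
  then show ?thesis
    using assms(2-4) pairs sep separated_sym[OF sep(1)] separated_sym[OF sep(2)]
      separated_sym[OF sep(3)]
    unfolding A by auto
qed

lemma supp_triples_card:
  assumes "A \<in> supp_triples X V E Tr v"
  shows "card A = 3"
proof -
  obtain a b c where A: "A = {a, b, c}"
    and sep: "separated V E v a b" "separated V E v a c" "separated V E v b c"
    using assms unfolding supp_triples_def by blast
  then show ?thesis using separated_neq[OF sep(1)] separated_neq[OF sep(2)] separated_neq[OF sep(3)]
    by simp
qed

lemma supp_triple_eq_Union_pairs:
  assumes "multiplicity_in Tr x = 2" "A \<in> supp_triples X V E Tr v" "x \<in> A"
  shows "A = \<Union>{p \<in> Tr. x \<in> p}"
proof -
  have "card (A - {x}) = 2" using supp_triples_card[OF assms(2)] assms(3) by simp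
  then obtain b c where bc: "A - {x} = {b, c}" "b \<noteq> c" by (meson card_2_iff)
  then have A: "A = {x, b, c}" and "b \<noteq> x" "c \<noteq> x" using assms(3) by auto
  then have pairs: "{{x, b}, {x, c}} \<subseteq> {p \<in> Tr. x \<in> p}"
    using supp_triples_pairwise[OF assms(2)] by auto
  have "card {{x, b}, {x, c}} = 2" using bc(2) by (auto simp: doubleton_eq_iff)
  moreover have "card {p \<in> Tr. x \<in> p} = 2" using assms(1) unfolding multiplicity_in_def .
  ultimately have "{p \<in> Tr. x \<in> p} = {{x, b}, {x, c}}"
    by (metis card_subset_eq card.infinite pairs zero_neq_numeral)
  then show ?thesis using A by auto
qed

lemma tree_finite_edges:
  assumes "is_tree V E"
  shows "finite E"
proof -
  have "E \<subseteq> Pow V" using assms unfolding is_tree_def by auto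
  then show ?thesis using assms unfolding is_tree_def by (meson finite_Pow_iff finite_subset)
qed

lemma finite_neighbours:
  assumes "finite E"
  shows "finite {n. {n, w} \<in> E}"
proof (rule finite_subset)
  show "{n. {n, w} \<in> E} \<subseteq> \<Union>{e \<in> E. finite e}" by auto
  show "finite (\<Union>{e \<in> E. finite e})" using assms by (intro finite_Union) auto
qed

lemma card_neighbours_le_vdegree:
  assumes "finite E"
  shows "card {n. {n, w} \<in> E} \<le> vdegree E w"
proof -
  have "inj_on (\<lambda>n. {n, w}) {n. {n, w} \<in> E}" by (auto simp: inj_on_def doubleton_eq_iff)
  moreover have "(\<lambda>n. {n, w}) ` {n. {n, w} \<in> E} \<subseteq> {e \<in> E. w \<in> e}" by auto
  moreover have "finite {e \<in> E. w \<in> e}" using assms by simp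
  ultimately show ?thesis unfolding vdegree_def by (rule card_inj_on_le)
qed

lemma binary_phylo_tree_leaf_edge:
  assumes "binary_phylo_tree X V E" "x \<in> X"
  obtains w where "w \<in> V" "w \<noteq> x" "{e \<in> E. x \<in> e} = {{x, w}}"
proof -
  have "vdegree E x = 1" using assms unfolding binary_phylo_tree_def by blast
  then obtain e where e: "{e \<in> E. x \<in> e} = {e}"
    unfolding vdegree_def by (rule card_1_singletonE)
  have "\<forall>e\<in>E. \<exists>u u'. e = {u, u'} \<and> u \<noteq> u' \<and> u \<in> V \<and> u' \<in> V"
    using assms(1) unfolding binary_phylo_tree_def is_tree_def by blast
  moreover have "e \<in> E" "x \<in> e" using e by auto
  ultimately obtain u u' where u: "e = {u, u'}" "u \<noteq> u'" "u \<in> V" "u' \<in> V" by blast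
  show ?thesis
  proof (cases "x = u")
    case True
    then show ?thesis using that[of u'] e u by simp
  next
    case False
    then have "x = u'" using \<open>x \<in> e\<close> u(1) by blast
    then show ?thesis using that[of u] e u by (simp add: insert_commute)
  qed
qed

lemma binary_phylo_tree_leaf_neighbour_interior:
  assumes tree: "binary_phylo_tree X V E" and "card X \<ge> 3" "x \<in> X"
    and pendant: "{e \<in> E. x \<in> e} = {{x, w}}"
  shows "w \<notin> X"
proof
  assume "w \<in> X"
  obtain x' where x': "{e \<in> E. w \<in> e} = {{w, x'}}"
    using binary_phylo_tree_leaf_edge[OF tree \<open>w \<in> X\<close>] by blast
  have "{x, w} \<in> {e \<in> E. x \<in> e}" unfolding pendant by simp
  then have "{x, w} \<in> {e \<in> E. w \<in> e}" by simp
  then have pendant': "{e \<in> E. w \<in> e} = {{x, w}}" unfolding x' by simp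
  have only_edge: "e = {x, w}" if "e \<in> E" "y \<in> e" "y \<in> {x, w}" for e y
  proof -
    have "e \<in> {e \<in> E. y \<in> e}" using that(1,2) by simp
    with that(3) show ?thesis
      by (elim insertE) (simp_all only: pendant pendant' singleton_iff empty_iff)
  qed
  have "b \<in> {x, w}" if "b \<in> V" for b
  proof (rule reach_in_closed)
    show "reach_in V E x b"
      using tree that \<open>x \<in> X\<close> unfolding binary_phylo_tree_def is_tree_def by blast
    show "u' \<in> {x, w}" if "{u, u'} \<in> E" "u \<in> {x, w}" for u u'
      using only_edge[OF that(1) _ that(2)] by (simp add: doubleton_eq_iff) blast
  qed simp
  then have "X \<subseteq> {x, w}" using tree unfolding binary_phylo_tree_def by auto
  then have "card X \<le> card {x, w}" by (simp add: card_mono)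
  also have "\<dots> \<le> 2" by (simp add: card_insert_le_m1)
  finally show False using \<open>card X \<ge> 3\<close> by simp
qed

text \<open>Each of \<open>a, b, c\<close> reaches \<open>w\<close> through a different neighbour of \<open>w\<close>; as \<open>w\<close> has at
most three neighbours, one of these is the pendant vertex \<open>x\<close>, which only reaches itself.\<close>

lemma pendant_in_separated_triple:
  assumes conn: "\<forall>a\<in>V. \<forall>b\<in>V. reach_in V E a b" and "finite E" "w \<in> V" "vdegree E w \<le> 3"
    and pendant: "{e \<in> E. x \<in> e} = {{x, w}}"
    and sep: "separated V E w a b" "separated V E w a c" "separated V E w b c"
  shows "x \<in> {a, b, c}"
proof -
  have exit: "\<exists>n. {n, w} \<in> E \<and> reach_in (V - {w}) E y n" if "y \<in> V - {w}" for y
    using reach_in_last_edge[of V E y w] conn that \<open>w \<in> V\<close> by auto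
  have abc: "a \<in> V - {w}" "b \<in> V - {w}" "c \<in> V - {w}" using sep unfolding separated_def by auto
  obtain na nb nc where n: "{na, w} \<in> E" "{nb, w} \<in> E" "{nc, w} \<in> E"
    and r: "reach_in (V - {w}) E a na" "reach_in (V - {w}) E b nb" "reach_in (V - {w}) E c nc"
    using exit[OF abc(1)] exit[OF abc(2)] exit[OF abc(3)] by blast
  have apart: "n \<noteq> n'"
    if "separated V E w y z" "reach_in (V - {w}) E y n" "reach_in (V - {w}) E z n'" for y z n n'
  proof
    assume "n = n'"
    then have "reach_in (V - {w}) E y z"
      using that(2) reach_in_sym[OF that(3)] by (blast intro: reach_in_trans)
    then show False using that(1) unfolding separated_def by blast
  qed
  have distinct: "na \<noteq> nb" "na \<noteq> nc" "nb \<noteq> nc"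
    using apart[OF sep(1) r(1,2)] apart[OF sep(2) r(1,3)] apart[OF sep(3) r(2,3)] .
  have "{x, w} \<in> {e \<in> E. x \<in> e}" unfolding pendant by simp
  then have "{x, na, nb, nc} \<subseteq> {n. {n, w} \<in> E}" using n by simp
  then have "card {x, na, nb, nc} \<le> card {n. {n, w} \<in> E}"
    using finite_neighbours[OF \<open>finite E\<close>] by (rule card_mono[rotated])
  also have "\<dots> \<le> 3" using card_neighbours_le_vdegree[OF \<open>finite E\<close>, of w] assms(4) by simp
  finally have "x \<in> {na, nb, nc}" using distinct by (auto simp: card_insert_if split: if_splits)
  then consider "reach_in (V - {w}) E a x" | "reach_in (V - {w}) E b x" | "reach_in (V - {w}) E c x"
    using r by blast
  moreover have "w \<notin> V - {w}" by simp
  ultimately show ?thesis by cases (auto dest: reach_in_pendant[OF _ pendant])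
qed

lemma supporting_vertex_unique:
  assumes conn: "\<forall>a\<in>V. \<forall>b\<in>V. reach_in V E a b" and "v \<in> V" "multiplicity_in Tr x = 2"
    and A: "A \<in> supp_triples X V E Tr v" "x \<in> A"
    and B: "B \<in> supp_triples X V E Tr w" "x \<in> B"
  shows "v = w"
proof (rule ccontr)
  assume "v \<noteq> w"
  have "B = A"
    using supp_triple_eq_Union_pairs[OF assms(3) A] supp_triple_eq_Union_pairs[OF assms(3) B]
    by simp
  have sep_v: "separated V E v s t" and sep_w: "separated V E w s t"
    if "s \<in> A" "t \<in> A" "s \<noteq> t" for s t
    using supp_triples_pairwise[OF A(1) that] supp_triples_pairwise[OF B(1)] that \<open>B = A\<close>
    by simp_all
  obtain p q r where pqr: "A = {p, q, r}" "p \<noteq> q" "p \<noteq> r" "q \<noteq> r"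
    using supp_triples_card[OF A(1)] unfolding card_3_iff by blast
  show False
    by (rule separating_vertex_unique[OF conn \<open>v \<in> V\<close> \<open>v \<noteq> w\<close>, of p q r])
      (auto intro!: sep_v sep_w simp: pqr)
qed

theorem lemma2:
  fixes X V :: "'a set" and E Tr :: "'a set set" and x :: 'a
  assumes "finite X" and "card X \<ge> 3"
    and "binary_phylo_tree X V E"
    and "triplet_cover X V E Tr"
    and "x \<in> X"
    and "multiplicity_in Tr x = 2"
  shows "support_deg X V E Tr x = 1"
proof -
  have conn: "\<forall>a\<in>V. \<forall>b\<in>V. reach_in V E a b" and "finite E"
    using assms(3) tree_finite_edges unfolding binary_phylo_tree_def is_tree_def by blast+
  obtain w where "w \<in> V" and pendant: "{e \<in> E. x \<in> e} = {{x, w}}"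
    using binary_phylo_tree_leaf_edge[OF assms(3,5)] by blast
  have "w \<in> interior X V"
    using binary_phylo_tree_leaf_neighbour_interior[OF assms(3,2,5) pendant] \<open>w \<in> V\<close>
    unfolding interior_def by blast
  then have "vdegree E w = 3" using assms(3) unfolding binary_phylo_tree_def interior_def by blast
  have w_adjacent: "\<forall>A\<in>supp_triples X V E Tr w. x \<in> A"
  proof
    fix A assume "A \<in> supp_triples X V E Tr w"
    then obtain a b c where "A = {a, b, c}"
      "separated V E w a b" "separated V E w a c" "separated V E w b c"
      unfolding supp_triples_def by blast
    then show "x \<in> A"
      using pendant_in_separated_triple[OF conn \<open>finite E\<close> \<open>w \<in> V\<close> _ pendant] \<open>vdegree E w = 3\<close>
      by simp
  qed
  have "v = w" if v: "v \<in> interior X V" "\<forall>A\<in>supp_triples X V E Tr v. x \<in> A" for v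
  proof -
    obtain A where A: "A \<in> supp_triples X V E Tr v" "x \<in> A"
      using assms(4) v unfolding triplet_cover_def by blast
    obtain B where B: "B \<in> supp_triples X V E Tr w" "x \<in> B"
      using assms(4) \<open>w \<in> interior X V\<close> w_adjacent unfolding triplet_cover_def by blast
    have "v \<in> V" using v(1) unfolding interior_def by simp
    then show ?thesis by (rule supporting_vertex_unique[OF conn _ assms(6) A B])
  qed
  then have "{v \<in> interior X V. \<forall>A\<in>supp_triples X V E Tr v. x \<in> A} = {w}"
    using \<open>w \<in> interior X V\<close> w_adjacent by blast
  then show ?thesis unfolding support_deg_def by simp
qed

end
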